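(* Let $G$ be a simple cubic graph on vertex set $[n]$ with girth at least $5$, let $A$ be a MAI set of $G$ and $B=V(G)\setminus A$, and let $Y$ (resp. $Z$) be the set of vertices of degree $1$ in $G[A]$ (resp. in $G[B]$). Then (i) each vertex of $Z$ has at most one neighbour in $Y$; (ii) each vertex of $Y$ has at most one neighbour in $Z$.
   Context: A vertex set $A$ of a graph $G$ is an AI set (almost independent set) if $\Delta(G[A])\le 1$, i.e. every component of the induced subgraph $G[A]$ is a single vertex or a single edge. A vertex set $A$ is a MAI set (maximum almost independent set) of $G$ if (M1) $A$ is an AI set, (M2) $A$ contains an independent set of size $\alpha(G)$, and (M3) $A$ has maximum cardinality among all vertex sets satisfying (M1) and (M2). $\alpha(G)$ is the independence number of $G$. *)

theory Defs
  imports Main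
begin

definition simple_graph :: "nat set \<Rightarrow> (nat \<Rightarrow> nat \<Rightarrow> bool) \<Rightarrow> bool" where
  "simple_graph V E \<longleftrightarrow> finite V \<and> (\<forall>u v. E u v \<longrightarrow> u \<in> V \<and> v \<in> V) \<and>
     (\<forall>u v. E u v \<longrightarrow> E v u) \<and> (\<forall>v. \<not> E v v)"

definition nbrs :: "(nat \<Rightarrow> nat \<Rightarrow> bool) \<Rightarrow> nat set \<Rightarrow> nat \<Rightarrow> nat set" where
  "nbrs E S v = {u \<in> S. E v u}"

definition cubic :: "nat set \<Rightarrow> (nat \<Rightarrow> nat \<Rightarrow> bool) \<Rightarrow> bool" where
  "cubic V E \<longleftrightarrow> (\<forall>v \<in> V. card (nbrs E V v) = 3)"

definition girth_ge_5 :: "nat set \<Rightarrow> (nat \<Rightarrow> nat \<Rightarrow> bool) \<Rightarrow> bool" where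
  "girth_ge_5 V E \<longleftrightarrow>
     (\<forall>a b c. \<not> (E a b \<and> E b c \<and> E c a)) \<and>
     (\<forall>a b c d. distinct [a, b, c, d] \<longrightarrow> \<not> (E a b \<and> E b c \<and> E c d \<and> E d a))"

definition indep_set :: "nat set \<Rightarrow> (nat \<Rightarrow> nat \<Rightarrow> bool) \<Rightarrow> nat set \<Rightarrow> bool" where
  "indep_set V E I \<longleftrightarrow> I \<subseteq> V \<and> (\<forall>u \<in> I. \<forall>v \<in> I. \<not> E u v)"

definition indep_number :: "nat set \<Rightarrow> (nat \<Rightarrow> nat \<Rightarrow> bool) \<Rightarrow> nat" where
  "indep_number V E = Max (card ` {I. indep_set V E I})"

definition ai_set :: "nat set \<Rightarrow> (nat \<Rightarrow> nat \<Rightarrow> bool) \<Rightarrow> nat set \<Rightarrow> bool" where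
  "ai_set V E A \<longleftrightarrow> A \<subseteq> V \<and> (\<forall>v \<in> A. card (nbrs E A v) \<le> 1)"

definition ai_with_max_indep :: "nat set \<Rightarrow> (nat \<Rightarrow> nat \<Rightarrow> bool) \<Rightarrow> nat set \<Rightarrow> bool" where
  "ai_with_max_indep V E A \<longleftrightarrow> ai_set V E A \<and>
     (\<exists>I \<subseteq> A. indep_set V E I \<and> card I = indep_number V E)"

definition mai_set :: "nat set \<Rightarrow> (nat \<Rightarrow> nat \<Rightarrow> bool) \<Rightarrow> nat set \<Rightarrow> bool" where
  "mai_set V E A \<longleftrightarrow> ai_with_max_indep V E A \<and>
     (\<forall>A'. ai_with_max_indep V E A' \<longrightarrow> card A' \<le> card A)"

end

theory Submission
  imports Defs
begin

text \<open>Within a maximum independent set contained in the MAI set A, a vertex y of degree 1 in G[A]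
  can be exchanged for its partner; repeating this, a maximum independent set in A can be made to
  avoid any independent set S of such vertices. Consequently (a) no vertex of B has all its
  A-neighbours in such an S, since it could be added to the independent set, and (b) no AI set
  containing A - S can be larger than A. For z in Z, cubicity gives exactly two A-neighbours, so
  (i) follows from (a) and triangle-freeness. For (ii), if y in Y had two neighbours z1, z2 in Z,
  the other A-neighbours a1, a2 of z1, z2 are isolated in G[A] by (a), distinct by the absence of
  4-cycles, and replacing y by z1, z2 yields an AI set contradicting (b).\<close>

lemma card_le_1_if_subset_singleton: "S \<subseteq> {x} \<Longrightarrow> card S \<le> 1"
  by (auto dest: subset_singletonD)

lemma card_le_1_if_unique: "(\<And>a b. a \<in> S \<Longrightarrow> b \<in> S \<Longrightarrow> a = b) \<Longrightarrow> card S \<le> 1"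
  by (cases "finite S") (auto simp: card_le_Suc0_iff_eq)

lemma indep_set_card_le_indep_number:
  assumes "finite V" "indep_set V E I"
  shows "card I \<le> indep_number V E"
proof -
  have "{I. indep_set V E I} \<subseteq> Pow V" by (auto simp: indep_set_def)
  then have "finite {I. indep_set V E I}" using assms(1) by (meson finite_Pow_iff finite_subset)
  then show ?thesis unfolding indep_number_def using assms(2) by auto
qed

locale sgraph =
  fixes V :: "nat set" and E :: "nat \<Rightarrow> nat \<Rightarrow> bool"
  assumes simple: "simple_graph V E"
begin

lemma finite_V: "finite V"
  using simple by (simp add: simple_graph_def)

lemma edge_sym: "E u v \<Longrightarrow> E v u"
  using simple by (simp add: simple_graph_def)

lemma edge_irrefl: "\<not> E v v"
  using simple by (simp add: simple_graph_def)

lemma finite_nbrs: "S \<subseteq> V \<Longrightarrow> finite (nbrs E S v)"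
  by (rule finite_subset[OF _ finite_V]) (auto simp: nbrs_def)

lemma indep_set_pair: "u \<in> V \<Longrightarrow> v \<in> V \<Longrightarrow> \<not> E u v \<Longrightarrow> indep_set V E {u, v}"
  by (auto simp: indep_set_def edge_irrefl dest: edge_sym)

lemma indep_set_insert:
  assumes "indep_set V E I" "p \<in> V" "\<And>u. u \<in> I \<Longrightarrow> \<not> E p u"
  shows "indep_set V E (insert p I)"
  using assms edge_irrefl edge_sym unfolding indep_set_def by blast

lemma ai_set_subset:
  assumes "ai_set V E A" "A' \<subseteq> A"
  shows "ai_set V E A'"
  unfolding ai_set_def
proof (intro conjI ballI)
  show "A' \<subseteq> V" using assms by (auto simp: ai_set_def)
  fix v assume "v \<in> A'"
  have "card (nbrs E A' v) \<le> card (nbrs E A v)"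
    using assms finite_nbrs by (intro card_mono) (auto simp: ai_set_def nbrs_def)
  also have "\<dots> \<le> 1" using assms \<open>v \<in> A'\<close> by (auto simp: ai_set_def)
  finally show "card (nbrs E A' v) \<le> 1" .
qed

lemma ai_set_insert_pendant:
  assumes "ai_set V E A" "z \<in> V" "nbrs E A z \<subseteq> {a}" "nbrs E A a = {}"
  shows "ai_set V E (insert z A)"
  unfolding ai_set_def
proof (intro conjI ballI)
  show "insert z A \<subseteq> V" using assms(1,2) by (auto simp: ai_set_def)
  have z_nbr: "v = a" if "v \<in> A" "E v z" for v
    using assms(3) that(1) edge_sym[OF that(2)] by (auto simp: nbrs_def)
  fix v assume v: "v \<in> insert z A"
  consider "v = z" | "v = a" | "v \<in> A" "v \<noteq> a" "v \<noteq> z" using v by blast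
  then show "card (nbrs E (insert z A) v) \<le> 1"
  proof cases
    case 1
    then have "nbrs E (insert z A) v \<subseteq> {a}" using assms(3) edge_irrefl by (auto simp: nbrs_def)
    then show ?thesis by (rule card_le_1_if_subset_singleton)
  next
    case 2
    then have "nbrs E (insert z A) v \<subseteq> {z}" using assms(4) by (auto simp: nbrs_def)
    then show ?thesis by (rule card_le_1_if_subset_singleton)
  next
    case 3
    then have "nbrs E (insert z A) v = nbrs E A v" using z_nbr by (auto simp: nbrs_def)
    then show ?thesis using assms(1) 3 by (simp add: ai_set_def)
  qed
qed

end

locale mai_graph = sgraph +
  fixes A :: "nat set"
  assumes mai: "mai_set V E A"
begin

abbreviation B :: "nat set" where "B \<equiv> V - A"
abbreviation Y :: "nat set" where "Y \<equiv> {v \<in> A. card (nbrs E A v) = 1}"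
abbreviation Z :: "nat set" where "Z \<equiv> {v \<in> B. card (nbrs E B v) = 1}"

lemma ai_set_A: "ai_set V E A"
  using mai by (simp add: mai_set_def ai_with_max_indep_def)

lemma A_subset_V: "A \<subseteq> V"
  using ai_set_A by (simp add: ai_set_def)

lemma finite_A: "finite A"
  using A_subset_V finite_V finite_subset by blast

lemma Y_partner:
  assumes "y \<in> Y"
  obtains p where "p \<in> A" "E y p" "nbrs E A p \<subseteq> {y}"
proof -
  obtain p where p: "nbrs E A y = {p}" using assms card_1_singletonE by blast
  then have "p \<in> A" "E y p" by (auto simp: nbrs_def)
  moreover have "y \<in> nbrs E A p" using assms edge_sym[OF \<open>E y p\<close>] by (simp add: nbrs_def)
  moreover have "card (nbrs E A p) \<le> Suc 0" using ai_set_A \<open>p \<in> A\<close> by (simp add: ai_set_def)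
  then have "\<forall>a \<in> nbrs E A p. \<forall>b \<in> nbrs E A p. a = b"
    using card_le_Suc0_iff_eq[OF finite_nbrs[OF A_subset_V]] by blast
  ultimately show ?thesis using that by blast
qed

lemma indep_set_swap:
  assumes "indep_set V E I" "I \<subseteq> A" "p \<in> A" "nbrs E A p \<subseteq> {y}"
  shows "indep_set V E (insert p (I - {y}))"
proof (rule indep_set_insert)
  show "indep_set V E (I - {y})" using assms(1) by (auto simp: indep_set_def)
  show "p \<in> V" using assms(3) A_subset_V by blast
  show "\<not> E p u" if "u \<in> I - {y}" for u
    using assms(2,4) that by (auto simp: nbrs_def)
qed

text \<open>The induction step swaps a vertex y of S with its partner p; independence of S keeps p
  outside S.\<close>

lemma max_indep_set_avoiding:
  assumes "S \<subseteq> Y" "indep_set V E S"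
  obtains I where "I \<subseteq> A - S" "indep_set V E I" "card I = indep_number V E"
proof -
  have "S \<subseteq> A" using assms(1) by blast
  then have "finite S" using finite_A by (rule finite_subset)
  then have "\<exists>I \<subseteq> A - S. indep_set V E I \<and> card I = indep_number V E"
    using assms
  proof (induction S rule: finite_induct)
    case empty
    then show ?case using mai by (auto simp: mai_set_def ai_with_max_indep_def)
  next
    case (insert y S)
    have "S \<subseteq> Y" "indep_set V E S"
      using insert.prems unfolding indep_set_def by blast+
    then obtain I where I: "I \<subseteq> A - S" "indep_set V E I" "card I = indep_number V E"
      using insert.IH by blast
    obtain p where p: "p \<in> A" "E y p" "nbrs E A p \<subseteq> {y}"
      using insert.prems(1) Y_partner by blast
    have "p \<notin> insert y S"
      using insert.prems(2) p(2) edge_irrefl unfolding indep_set_def by blast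
    define I' where "I' = insert p (I - {y})"
    have indep: "indep_set V E I'" unfolding I'_def using indep_set_swap I(1,2) p(1,3) by blast
    have "finite I" using I(1) finite_A by (meson Diff_subset finite_subset subset_trans)
    have "card I \<le> card I'"
    proof (cases "y \<in> I")
      case True
      then have "p \<notin> I - {y}" using I(2) p(2) unfolding indep_set_def by blast
      then show ?thesis using True \<open>finite I\<close> by (simp add: I'_def card_Suc_Diff1)
    next
      case False
      then show ?thesis using \<open>finite I\<close> by (simp add: I'_def card_mono subset_insertI)
    qed
    moreover have "card I' \<le> indep_number V E"
      using finite_V indep by (rule indep_set_card_le_indep_number)
    moreover have "I' \<subseteq> A - insert y S" using I(1) p(1) \<open>p \<notin> insert y S\<close> by (auto simp: I'_def)
    ultimately show ?case using indep I(3) by (intro exI[of _ I']) simp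
  qed
  then show ?thesis using that by blast
qed

lemma B_nbrs_not_within_indep_Y:
  assumes "z \<in> B" "S \<subseteq> Y" "indep_set V E S" "nbrs E A z \<subseteq> S"
  shows False
proof -
  obtain I where I: "I \<subseteq> A - S" "indep_set V E I" "card I = indep_number V E"
    using max_indep_set_avoiding[OF assms(2,3)] .
  have "indep_set V E (insert z I)"
  proof (rule indep_set_insert[OF I(2)])
    show "z \<in> V" using assms(1) by blast
    show "\<not> E z u" if "u \<in> I" for u
      using assms(4) I(1) that by (auto simp: nbrs_def)
  qed
  then have "card (insert z I) \<le> indep_number V E"
    using finite_V by (rule indep_set_card_le_indep_number[rotated])
  moreover have "card (insert z I) = card I + 1"
  proof -
    have "z \<notin> I" "finite I" using I(1) assms(1) finite_subset[OF _ finite_A, of I] by blast+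
    then show ?thesis by simp
  qed
  ultimately show False using I(3) by simp
qed

lemma ai_superset_of_A_minus_indep_Y_card_le:
  assumes "ai_set V E A'" "A - S \<subseteq> A'" "S \<subseteq> Y" "indep_set V E S"
  shows "card A' \<le> card A"
proof -
  obtain I where "I \<subseteq> A - S" "indep_set V E I" "card I = indep_number V E"
    using max_indep_set_avoiding[OF assms(3,4)] .
  then have "ai_with_max_indep V E A'"
    using assms(1,2) unfolding ai_with_max_indep_def by blast
  then show ?thesis using mai by (simp add: mai_set_def)
qed

end

locale cubic_girth5_mai = mai_graph +
  assumes cubic: "cubic V E" and girth: "girth_ge_5 V E"
begin

lemma no_triangle: "E a b \<Longrightarrow> E b c \<Longrightarrow> E c a \<Longrightarrow> False"
  using girth unfolding girth_ge_5_def by blast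

lemma no_4cycle: "distinct [a, b, c, d] \<Longrightarrow> E a b \<Longrightarrow> E b c \<Longrightarrow> E c d \<Longrightarrow> E d a \<Longrightarrow> False"
  using girth unfolding girth_ge_5_def by blast

lemma card_A_nbrs_of_Z:
  assumes "z \<in> Z"
  shows "card (nbrs E A z) = 2"
proof -
  have "nbrs E V z = nbrs E A z \<union> nbrs E B z" using A_subset_V by (auto simp: nbrs_def)
  moreover have "nbrs E A z \<inter> nbrs E B z = {}" by (auto simp: nbrs_def)
  ultimately have "card (nbrs E V z) = card (nbrs E A z) + card (nbrs E B z)"
    using card_Un_disjoint finite_nbrs[OF A_subset_V] finite_nbrs[OF Diff_subset] by metis
  moreover have "card (nbrs E V z) = 3" "card (nbrs E B z) = 1"
    using cubic assms unfolding cubic_def by blast+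
  ultimately show ?thesis by simp
qed

lemma A_nbrs_of_Z_eq:
  assumes "z \<in> Z" "y \<in> nbrs E A z" "a \<in> nbrs E A z" "a \<noteq> y"
  shows "nbrs E A z = {y, a}"
proof (rule card_subset_eq[symmetric])
  show "finite (nbrs E A z)" using finite_nbrs[OF A_subset_V] .
  show "{y, a} \<subseteq> nbrs E A z" using assms(2,3) by blast
  show "card {y, a} = card (nbrs E A z)" using card_A_nbrs_of_Z[OF assms(1)] assms(4) by simp
qed

lemma Z_card_Y_nbrs_le_1:
  assumes "z \<in> Z"
  shows "card (nbrs E Y z) \<le> 1"
proof (rule card_le_1_if_unique, rule ccontr)
  fix y1 y2 assume y: "y1 \<in> nbrs E Y z" "y2 \<in> nbrs E Y z" "y1 \<noteq> y2"
  then have y_Y: "{y1, y2} \<subseteq> Y" and "E z y1" "E z y2" by (auto simp: nbrs_def)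
  then have nbrs_z: "nbrs E A z = {y1, y2}"
    using A_nbrs_of_Z_eq[OF assms] y(3) by (simp add: nbrs_def)
  have "\<not> E y1 y2" using no_triangle[of z y1 y2] \<open>E z y1\<close> \<open>E z y2\<close> edge_sym by blast
  then have indep: "indep_set V E {y1, y2}"
    using y_Y A_subset_V by (intro indep_set_pair) auto
  have "z \<in> B" using assms by blast
  from B_nbrs_not_within_indep_Y[OF this y_Y indep] nbrs_z show False by blast
qed

lemma Z_nbr_of_Y_other_A_nbr_isolated:
  assumes "z \<in> Z" "y \<in> Y" "E y z"
  obtains a where "nbrs E A z = {y, a}" "a \<noteq> y" "nbrs E A a = {}"
proof -
  have y_nbr: "y \<in> nbrs E A z" using assms(2) edge_sym[OF assms(3)] by (simp add: nbrs_def)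
  obtain a where a: "a \<in> nbrs E A z" "a \<noteq> y"
    using card_A_nbrs_of_Z[OF assms(1)] by (metis card_2_iff insertCI)
  have nbrs_z: "nbrs E A z = {y, a}" using A_nbrs_of_Z_eq[OF assms(1) y_nbr a] .
  have a_A: "a \<in> A" "E z a" using a(1) by (simp_all add: nbrs_def)
  have "a \<notin> Y"
  proof
    assume "a \<in> Y"
    then have y_Y: "{y, a} \<subseteq> Y" using assms(2) by blast
    have "\<not> E y a" using no_triangle[of y z a] assms(3) a_A(2) edge_sym by blast
    then have indep: "indep_set V E {y, a}"
      using a_A(1) assms(2) A_subset_V by (intro indep_set_pair) auto
    have "z \<in> B" using assms(1) by blast
    from B_nbrs_not_within_indep_Y[OF this y_Y indep] nbrs_z show False by blast
  qed
  moreover have "card (nbrs E A a) \<le> 1" using a_A(1) ai_set_A by (simp add: ai_set_def)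
  ultimately have "nbrs E A a = {}"
    using a_A(1) finite_nbrs[OF A_subset_V, of a] card_gt_0_iff[of "nbrs E A a"] by fastforce
  then show ?thesis using that nbrs_z a(2) by blast
qed

text \<open>Exchanging y for z1 and z2 adds two pendant edges z1 a1 and z2 a2 to G[A - {y}].\<close>

lemma Y_card_Z_nbrs_le_1:
  assumes "y \<in> Y"
  shows "card (nbrs E Z y) \<le> 1"
proof (rule card_le_1_if_unique, rule ccontr)
  fix z1 z2 assume z: "z1 \<in> nbrs E Z y" "z2 \<in> nbrs E Z y" "z1 \<noteq> z2"
  then have zZ: "z1 \<in> Z" "z2 \<in> Z" "E y z1" "E y z2" by (auto simp: nbrs_def)
  obtain a1 where a1: "nbrs E A z1 = {y, a1}" "a1 \<noteq> y" "nbrs E A a1 = {}"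
    using Z_nbr_of_Y_other_A_nbr_isolated zZ(1,3) assms by blast
  obtain a2 where a2: "nbrs E A z2 = {y, a2}" "a2 \<noteq> y" "nbrs E A a2 = {}"
    using Z_nbr_of_Y_other_A_nbr_isolated zZ(2,4) assms by blast
  have a_edges: "a1 \<in> A" "E z1 a1" "a2 \<in> A" "E z2 a2"
    using a1(1) a2(1) by (auto simp: nbrs_def)
  have "\<not> E z1 z2" using no_triangle[of y z1 z2] zZ edge_sym by blast
  have "a1 \<noteq> a2"
  proof
    assume "a1 = a2"
    then have "distinct [y, z1, a1, z2]" using zZ a_edges a1(2) z(3) assms by auto
    then show False
      using no_4cycle[of y z1 a1 z2] zZ(3,4) a_edges edge_sym \<open>a1 = a2\<close> by blast
  qed
  define A0 where "A0 = A - {y}"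
  have "ai_set V E A0" using ai_set_A ai_set_subset by (auto simp: A0_def)
  moreover have "nbrs E A0 z1 \<subseteq> {a1}" "nbrs E A0 a1 = {}"
    using a1 by (auto simp: A0_def nbrs_def)
  ultimately have ai1: "ai_set V E (insert z1 A0)"
    using ai_set_insert_pendant zZ(1) by blast
  have "nbrs E (insert z1 A0) z2 \<subseteq> {a2}"
    using a2(1) \<open>\<not> E z1 z2\<close> by (auto simp: A0_def nbrs_def dest: edge_sym)
  moreover have "nbrs E (insert z1 A0) a2 = {}"
    using a1(1) a2 a_edges \<open>a1 \<noteq> a2\<close> by (auto simp: A0_def nbrs_def dest: edge_sym)
  ultimately have "ai_set V E (insert z2 (insert z1 A0))"
    using ai_set_insert_pendant ai1 zZ(2) by blast
  moreover have "indep_set V E {y}" using assms A_subset_V edge_irrefl by (auto simp: indep_set_def)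
  ultimately have "card (insert z2 (insert z1 A0)) \<le> card A"
    using assms by (intro ai_superset_of_A_minus_indep_Y_card_le[of _ "{y}"]) (auto simp: A0_def)
  moreover have "card (insert z2 (insert z1 A0)) = card A + 1"
  proof -
    have "y \<in> A" "z1 \<notin> A" "z2 \<notin> A" using assms zZ(1,2) by blast+
    then show ?thesis
      using z(3) finite_A card_Suc_Diff1[OF finite_A \<open>y \<in> A\<close>] by (simp add: A0_def)
  qed
  ultimately show False by simp
qed

end

theorem lemma8:
  fixes n :: nat and E :: "nat \<Rightarrow> nat \<Rightarrow> bool" and A :: "nat set"
  defines "V \<equiv> {1..n}"
  defines "B \<equiv> V - A"
  defines "Y \<equiv> {v \<in> A. card (nbrs E A v) = 1}"
  defines "Z \<equiv> {v \<in> B. card (nbrs E B v) = 1}"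
  assumes "simple_graph V E" and "cubic V E" and "girth_ge_5 V E"
    and "mai_set V E A"
  shows "(\<forall>z \<in> Z. card (nbrs E Y z) \<le> 1) \<and> (\<forall>y \<in> Y. card (nbrs E Z y) \<le> 1)"
proof -
  interpret cubic_girth5_mai V E A
    using assms(5-8) by unfold_locales
  show ?thesis
    unfolding Y_def Z_def B_def by (intro conjI ballI Z_card_Y_nbrs_le_1 Y_card_Z_nbrs_le_1)
qed

end
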